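(* Let $V$ be an $R$-module which admits an infinitesimal character (i.e., every element of the center $Z(R)$ acts on $V$ by a scalar), and let $w\in V$ be a nonzero Whittaker vector of type $\eta$. Then the submodule $Rw\subseteq V$ is irreducible.
   Context: Let $f\in\mathbb{C}[H]$ be a polynomial. $R=R(f)$ is the associative $\mathbb{C}$-algebra generated by $E,F,H$ with relations $EF-FE=f(H)$, $HE-EH=E$, $HF-FH=-F$. Let $R(E)=\mathbb{C}[E]$; $Z(R)$ is the center of $R$. Fix an algebra homomorphism $\eta:R(E)\to\mathbb{C}$ with $\eta(E)\neq 0$. A vector $w$ of an $R$-module is a Whittaker vector of type $\eta$ if $Ew=\eta(E)w$. *)

theory Defs
  imports Complex_Main "HOL-Library.Poly_Mapping" "HOL-Computational_Algebra.Polynomial"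
begin

datatype gen = GE | GF | GH

text \<open>The free associative C-algebra on E,F,H: finitely supported functions on words.\<close>
type_synonym falg = "gen list \<Rightarrow>\<^sub>0 complex"

definition fmul :: "falg \<Rightarrow> falg \<Rightarrow> falg" where
  "fmul p q = (\<Sum>u\<in>Poly_Mapping.keys p. \<Sum>v\<in>Poly_Mapping.keys q. Poly_Mapping.single (u @ v) (Poly_Mapping.lookup p u * Poly_Mapping.lookup q v))"

definition fgen :: "gen \<Rightarrow> falg" where
  "fgen g = Poly_Mapping.single [g] 1"

definition fpolyH :: "complex poly \<Rightarrow> falg" where
  "fpolyH f = (\<Sum>i\<le>degree f. Poly_Mapping.single (replicate i GH) (coeff f i))"

definition rels :: "complex poly \<Rightarrow> falg set" where
  "rels f = { fmul (fgen GE) (fgen GF) - fmul (fgen GF) (fgen GE) - fpolyH f,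
              fmul (fgen GH) (fgen GE) - fmul (fgen GE) (fgen GH) - fgen GE,
              fmul (fgen GH) (fgen GF) - fmul (fgen GF) (fgen GH) + fgen GF }"

text \<open>The two-sided ideal generated by the relations; R(f) = free algebra / rel_ideal f.\<close>
inductive_set rel_ideal :: "complex poly \<Rightarrow> falg set" for f where
  zero: "0 \<in> rel_ideal f"
| gen: "r \<in> rels f \<Longrightarrow> fmul (fmul a r) b \<in> rel_ideal f"
| add: "x \<in> rel_ideal f \<Longrightarrow> y \<in> rel_ideal f \<Longrightarrow> x + y \<in> rel_ideal f"

text \<open>z represents an element of the center Z(R) of R = R(f).\<close>
definition central :: "complex poly \<Rightarrow> falg \<Rightarrow> bool" where
  "central f z \<longleftrightarrow> (\<forall>x. fmul z x - fmul x z \<in> rel_ideal f)"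

definition cvs :: "(complex \<Rightarrow> 'v::ab_group_add \<Rightarrow> 'v) \<Rightarrow> bool" where
  "cvs sm \<longleftrightarrow> (\<forall>v. sm 1 v = v) \<and> (\<forall>a b v. sm (a * b) v = sm a (sm b v))
     \<and> (\<forall>a b v. sm (a + b) v = sm a v + sm b v) \<and> (\<forall>a u v. sm a (u + v) = sm a u + sm a v)"

definition clin :: "(complex \<Rightarrow> 'v::ab_group_add \<Rightarrow> 'v) \<Rightarrow> ('v \<Rightarrow> 'v) \<Rightarrow> bool" where
  "clin sm T \<longleftrightarrow> (\<forall>u v. T (u + v) = T u + T v) \<and> (\<forall>a v. T (sm a v) = sm a (T v))"

fun wact :: "(gen \<Rightarrow> 'v \<Rightarrow> 'v) \<Rightarrow> gen list \<Rightarrow> 'v \<Rightarrow> 'v" where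
  "wact rho [] v = v"
| "wact rho (g # ws) v = rho g (wact rho ws v)"

definition act :: "(complex \<Rightarrow> 'v::ab_group_add \<Rightarrow> 'v) \<Rightarrow> (gen \<Rightarrow> 'v \<Rightarrow> 'v) \<Rightarrow> falg \<Rightarrow> 'v \<Rightarrow> 'v" where
  "act sm rho p v = (\<Sum>u\<in>Poly_Mapping.keys p. sm (Poly_Mapping.lookup p u) (wact rho u v))"

definition is_Rmod :: "complex poly \<Rightarrow> (complex \<Rightarrow> 'v::ab_group_add \<Rightarrow> 'v) \<Rightarrow> (gen \<Rightarrow> 'v \<Rightarrow> 'v) \<Rightarrow> bool" where
  "is_Rmod f sm rho \<longleftrightarrow> cvs sm \<and> (\<forall>g. clin sm (rho g))
     \<and> (\<forall>v. rho GE (rho GF v) - rho GF (rho GE v) = act sm rho (fpolyH f) v)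
     \<and> (\<forall>v. rho GH (rho GE v) - rho GE (rho GH v) = rho GE v)
     \<and> (\<forall>v. rho GH (rho GF v) - rho GF (rho GH v) = - rho GF v)"

definition has_inf_char :: "complex poly \<Rightarrow> (complex \<Rightarrow> 'v::ab_group_add \<Rightarrow> 'v) \<Rightarrow> (gen \<Rightarrow> 'v \<Rightarrow> 'v) \<Rightarrow> bool" where
  "has_inf_char f sm rho \<longleftrightarrow> (\<forall>z. central f z \<longrightarrow> (\<exists>c. \<forall>v. act sm rho z v = sm c v))"

definition submod :: "(complex \<Rightarrow> 'v::ab_group_add \<Rightarrow> 'v) \<Rightarrow> (gen \<Rightarrow> 'v \<Rightarrow> 'v) \<Rightarrow> 'v set \<Rightarrow> bool" where
  "submod sm rho S \<longleftrightarrow> 0 \<in> S \<and> (\<forall>u\<in>S. \<forall>v\<in>S. u + v \<in> S) \<and> (\<forall>a. \<forall>v\<in>S. sm a v \<in> S)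
     \<and> (\<forall>g. \<forall>v\<in>S. rho g v \<in> S)"

definition irreducible_submod :: "(complex \<Rightarrow> 'v::ab_group_add \<Rightarrow> 'v) \<Rightarrow> (gen \<Rightarrow> 'v \<Rightarrow> 'v) \<Rightarrow> 'v set \<Rightarrow> bool" where
  "irreducible_submod sm rho M \<longleftrightarrow> submod sm rho M \<and> M \<noteq> {0}
     \<and> (\<forall>N. submod sm rho N \<and> N \<subseteq> M \<longrightarrow> N = {0} \<or> N = M)"

definition cyc :: "(complex \<Rightarrow> 'v::ab_group_add \<Rightarrow> 'v) \<Rightarrow> (gen \<Rightarrow> 'v \<Rightarrow> 'v) \<Rightarrow> 'v \<Rightarrow> 'v set" where
  "cyc sm rho w = {act sm rho p w | p. True}"

end

theory Submission
  imports Defs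
begin

(* The Casimir element F E + u(H), where u(H) - u(H-1) = f(H), is central, so it acts on V by a
   scalar c. On the Whittaker vector w this reads eta F w + u(H) w = c w, so F w lies in C[H] w;
   together with E q(H) = q(H-1) E and F q(H) = q(H+1) F this makes C[H] w a submodule, hence
   equal to R w. If N is a nonzero submodule of C[H] w, the polynomials q with q(H) w in N are
   closed under differences and, applying E and dividing by eta, under q(x) |-> q(x-1). Since
   q(x) - q(x-1) has smaller degree and vanishes only for constant q, this set contains a nonzero
   constant, so w lies in N and N = R w. *)

section \<open>Difference operators on polynomials\<close>

lemma pcompose_shift_eq_imp_degree_0:
  fixes q :: "'a::{idom,ring_char_0} poly"
  assumes "pcompose q [:c, 1:] = q" and "c \<noteq> 0"
  shows "degree q = 0"
proof -
  have periodic: "poly q (x + c) = poly q x" for x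
    using arg_cong[OF assms(1), of "\<lambda>p. poly p x"] by (simp add: poly_pcompose add.commute)
  have "poly q (of_nat n * c) = poly q 0" for n
  proof (induction n)
    case (Suc n)
    then show ?case
      using periodic[of "of_nat n * c"] by (simp add: distrib_right add.commute)
  qed simp
  then have "range (\<lambda>n. of_nat n * c) \<subseteq> {x. poly (q - [:poly q 0:]) x = 0}"
    by auto
  moreover have "infinite (range (\<lambda>n::nat. of_nat n * c))"
    using assms(2) by (intro range_inj_infinite) (auto simp: inj_def)
  ultimately have "q - [:poly q 0:] = 0"
    using poly_roots_finite finite_subset by blast
  then show ?thesis
    by (metis degree_pCons_0 eq_iff_diff_eq_0)
qed

lemma degree_diff_pcompose_shift_less:
  fixes q :: "'a::idom poly"
  assumes "degree q > 0"
  shows "degree (q - pcompose q [:c, 1:]) < degree q"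
proof -
  have same_degree: "degree (pcompose q [:c, 1:]) = degree q"
    by (simp add: degree_pcompose)
  moreover have "lead_coeff (pcompose q [:c, 1:]) = lead_coeff q"
    by (simp add: lead_coeff_comp)
  ultimately have "coeff (q - pcompose q [:c, 1:]) (degree q) = 0"
    by simp
  moreover have "degree (q - pcompose q [:c, 1:]) \<le> degree q"
    using degree_diff_le[of q "degree q"] same_degree by simp
  ultimately show ?thesis
    using assms by (metis le_neq_implies_less leading_coeff_0_iff degree_0)
qed

lemma coeff_diff_shift_X_power:
  "coeff ([:0, 1:] ^ Suc n - pcompose ([:0, 1:] ^ Suc n) [:-1, 1:]) n = (of_nat (Suc n) :: 'a::comm_ring_1)"
proof -
  have "pcompose ([:0, 1:] ^ m) q = q ^ m" for m and q :: "'a poly"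
    by (induction m) (simp_all add: pcompose_mult pcompose_pCons one_pCons)
  then show ?thesis
    by (simp add: coeff_linear_poly_power del: power_Suc)
qed

lemma degree_reduce_by_shift_difference:
  fixes f :: "'a::field_char_0 poly"
  assumes "degree f \<le> Suc n"
  defines "X \<equiv> [:0, 1:] ^ Suc (Suc n)"
  shows "degree (f - smult (coeff f (Suc n) / of_nat (Suc (Suc n))) (X - pcompose X [:-1, 1:])) \<le> n"
proof -
  define g where "g = f - smult (coeff f (Suc n) / of_nat (Suc (Suc n))) (X - pcompose X [:-1, 1:])"
  have "degree (X - pcompose X [:-1, 1:]) \<le> Suc n"
    using degree_diff_pcompose_shift_less[of X "-1"] by (simp add: X_def degree_linear_power)
  then have deg_g: "degree g \<le> Suc n"
    unfolding g_def by (rule degree_diff_le[OF assms(1) order.trans[OF degree_smult_le]])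
  have "coeff (X - pcompose X [:-1, 1:]) (Suc n) = of_nat (Suc (Suc n))"
    unfolding X_def by (rule coeff_diff_shift_X_power)
  moreover have "of_nat (Suc (Suc n)) \<noteq> (0 :: 'a)"
    by (rule of_nat_neq_0)
  ultimately have "coeff g (Suc n) = 0"
    by (simp only: g_def coeff_diff coeff_smult) simp
  with deg_g have "coeff g i = 0" if "i > n" for i
    using that coeff_eq_0[of g i] by (cases "i = Suc n") auto
  then show ?thesis
    unfolding g_def[symmetric] by (simp add: degree_le)
qed

lemma ex_poly_antidifference:
  fixes f :: "'a::field_char_0 poly"
  shows "\<exists>u. u - pcompose u [:-1, 1:] = f"
proof -
  have "\<exists>u. u - pcompose u [:-1, 1:] = f" if "degree f \<le> n" for n and f :: "'a poly"
    using that
  proof (induction n arbitrary: f)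
    case 0
    then obtain a where "f = [:a:]"
      by (metis degree_0_id le_zero_eq)
    then have "[:0, a:] - pcompose [:0, a:] [:-1, 1:] = f"
      by (simp add: pcompose_pCons algebra_simps)
    then show ?case ..
  next
    case (Suc n)
    define X :: "'a poly" where "X = [:0, 1:] ^ Suc (Suc n)"
    define c where "c = coeff f (Suc n) / of_nat (Suc (Suc n))"
    define g where "g = f - smult c (X - pcompose X [:-1, 1:])"
    have "degree g \<le> n"
      using degree_reduce_by_shift_difference[OF Suc.prems] unfolding g_def c_def X_def .
    then obtain v where v: "v - pcompose v [:-1, 1:] = g"
      using Suc.IH by blast
    have "(v + smult c X) - pcompose (v + smult c X) [:-1, 1:]
        = (v - pcompose v [:-1, 1:]) + smult c (X - pcompose X [:-1, 1:])"
      by (simp add: pcompose_add pcompose_smult smult_diff_right)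
    also have "\<dots> = f"
      by (simp add: v g_def)
    finally show ?case ..
  qed
  then show ?thesis by blast
qed

lemma shift_closed_poly_subgroup_has_const:
  fixes J :: "'a::{idom,ring_char_0} poly set"
  assumes diff_closed: "\<And>p q. p \<in> J \<Longrightarrow> q \<in> J \<Longrightarrow> p - q \<in> J"
    and shift_closed: "\<And>q. q \<in> J \<Longrightarrow> pcompose q [:c, 1:] \<in> J"
    and "c \<noteq> 0" and "q \<in> J" and "q \<noteq> 0"
  shows "\<exists>a. a \<noteq> 0 \<and> [:a:] \<in> J"
  using assms(4,5)
proof (induction "degree q" arbitrary: q rule: less_induct)
  case less
  show ?case
  proof (cases "degree q = 0")
    case True
    then show ?thesis
      using less.prems by (metis degree_0_id pCons_eq_0_iff)
  next
    case False
    let ?r = "q - pcompose q [:c, 1:]"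
    have "?r \<in> J"
      using less.prems by (simp add: diff_closed shift_closed)
    moreover have "?r \<noteq> 0"
      using False pcompose_shift_eq_imp_degree_0[OF _ \<open>c \<noteq> 0\<close>, of q] by auto
    moreover have "degree ?r < degree q"
      using False degree_diff_pcompose_shift_less by blast
    ultimately show ?thesis
      using less.hyps by blast
  qed
qed

section \<open>The free algebra and the relation ideal\<close>

(* Words under concatenation form the free monoid; this makes falg its monoid algebra, with
   product fmul. *)
instantiation list :: (type) monoid_add
begin
definition zero_list :: "'a list" where "zero_list = []"
definition plus_list :: "'a list \<Rightarrow> 'a list \<Rightarrow> 'a list" where "plus_list xs ys = xs @ ys"
instance by standard (auto simp: zero_list_def plus_list_def)
end

lemma poly_mapping_sum_single:
  "(p :: 'a \<Rightarrow>\<^sub>0 'b::comm_monoid_add) = (\<Sum>k\<in>Poly_Mapping.keys p. Poly_Mapping.single k (Poly_Mapping.lookup p k))"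
  by (rule poly_mapping_eqI) (auto simp: lookup_sum lookup_single when_def in_keys_iff)

lemma poly_mapping_induct [case_names zero single add]:
  assumes "P 0" and "\<And>k c. P (Poly_Mapping.single k c)" and "\<And>p q. P p \<Longrightarrow> P q \<Longrightarrow> P (p + q)"
  shows "P (p :: 'a \<Rightarrow>\<^sub>0 'b::comm_monoid_add)"
proof -
  have "P (\<Sum>k\<in>S. Poly_Mapping.single k (Poly_Mapping.lookup p k))" if "finite S" for S
    using that by (induction S rule: finite_induct) (auto intro: assms)
  then show ?thesis
    by (subst poly_mapping_sum_single) simp
qed

lemma fmul_eq_times: "fmul p q = p * q"
proof -
  have "p * q = (\<Sum>u\<in>Poly_Mapping.keys p. Poly_Mapping.single u (Poly_Mapping.lookup p u)) *
       (\<Sum>v\<in>Poly_Mapping.keys q. Poly_Mapping.single v (Poly_Mapping.lookup q v))"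
    by (simp flip: poly_mapping_sum_single)
  also have "\<dots> = fmul p q"
    unfolding fmul_def sum_distrib_right sum_distrib_left mult_single plus_list_def
    by (subst sum.swap) simp
  finally show ?thesis by simp
qed

lemma single_Nil_one: "Poly_Mapping.single [] 1 = (1 :: falg)"
  by (metis single_one zero_list_def)

lemma single_Cons_mult: "Poly_Mapping.single (g # u) c = fgen g * (Poly_Mapping.single u c :: falg)"
  by (simp add: fgen_def mult_single plus_list_def)

lemma single_Nil_mult_commute: "Poly_Mapping.single [] a * x = x * (Poly_Mapping.single [] a :: falg)"
  by (induction x rule: poly_mapping_induct)
    (simp_all add: mult_single plus_list_def mult.commute distrib_left distrib_right)

lemma rel_ideal_mult: "x \<in> rel_ideal f \<Longrightarrow> a * x * b \<in> rel_ideal f"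
proof (induction x arbitrary: a b rule: rel_ideal.induct)
  case (gen r a' b')
  have "a * (a' * r * b') * b = (a * a') * r * (b' * b)"
    by (simp add: mult.assoc)
  then show ?case
    using rel_ideal.gen[OF gen, of "a * a'" "b' * b"] by (simp add: fmul_eq_times)
qed (simp_all add: distrib_left distrib_right rel_ideal.intros)

lemma rel_ideal_mult_left: "x \<in> rel_ideal f \<Longrightarrow> a * x \<in> rel_ideal f"
  using rel_ideal_mult[of x f a 1] by simp

lemma rel_ideal_mult_right: "x \<in> rel_ideal f \<Longrightarrow> x * b \<in> rel_ideal f"
  using rel_ideal_mult[of x f 1 b] by simp

lemma rel_ideal_uminus: "x \<in> rel_ideal f \<Longrightarrow> - x \<in> rel_ideal f"
  using rel_ideal_mult[of x f "-1" 1] by simp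

lemma rel_ideal_diff: "x \<in> rel_ideal f \<Longrightarrow> y \<in> rel_ideal f \<Longrightarrow> x - y \<in> rel_ideal f"
  using rel_ideal.add[OF _ rel_ideal_uminus] by (simp only: diff_conv_add_uminus)

lemmas rel_ideal_closure =
  rel_ideal.zero rel_ideal.add rel_ideal_diff rel_ideal_uminus rel_ideal_mult_left rel_ideal_mult_right

abbreviation E :: falg where "E \<equiv> fgen GE"
abbreviation F :: falg where "F \<equiv> fgen GF"
abbreviation H :: falg where "H \<equiv> fgen GH"

lemma rels_in_rel_ideal:
  "E * F - F * E - fpolyH f \<in> rel_ideal f"
  "H * E - E * H - E \<in> rel_ideal f"
  "H * F - F * H + F \<in> rel_ideal f"
  using rel_ideal.gen[of _ f 1 1] by (simp_all add: rels_def fmul_eq_times)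

lemma central_if_commutes_with_gens:
  assumes "\<And>g. z * fgen g - fgen g * z \<in> rel_ideal f"
  shows "central f z"
proof -
  let ?D = "\<lambda>x. z * x - x * z"
  have D_mult: "?D (x * y) = ?D x * y + x * ?D y" for x y
    by (simp add: algebra_simps)
  have "?D (Poly_Mapping.single u c) \<in> rel_ideal f" for u c
  proof (induction u)
    case Nil
    then show ?case
      using single_Nil_mult_commute[of c z] by (simp add: rel_ideal.zero)
  next
    case (Cons g u)
    then show ?case
      using assms by (simp only: single_Cons_mult D_mult) (blast intro: rel_ideal_closure)
  qed
  moreover have "?D (x + y) = ?D x + ?D y" for x y
    by (simp add: algebra_simps)
  ultimately have "?D x \<in> rel_ideal f" for x
    by (induction x rule: poly_mapping_induct) (simp_all add: rel_ideal.intros)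
  then show ?thesis
    unfolding central_def fmul_eq_times by blast
qed

lemma fpolyH_eq_sum_atMost:
  "degree p \<le> n \<Longrightarrow> fpolyH p = (\<Sum>i\<le>n. Poly_Mapping.single (replicate i GH) (coeff p i))"
  unfolding fpolyH_def by (rule sum.mono_neutral_left) (auto simp: coeff_eq_0)

lemma fpolyH_0 [simp]: "fpolyH 0 = 0"
  by (simp add: fpolyH_def)

lemma fpolyH_add: "fpolyH (p + q) = fpolyH p + fpolyH q"
proof -
  let ?n = "max (degree p) (degree q)"
  have "degree (p + q) \<le> ?n"
    by (rule degree_add_le) auto
  then show ?thesis
    by (simp add: fpolyH_eq_sum_atMost[of _ ?n] single_add sum.distrib)
qed

lemma fpolyH_smult: "fpolyH (smult a p) = Poly_Mapping.single [] a * fpolyH p"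
  unfolding fpolyH_def by (simp add: sum_distrib_left mult_single plus_list_def)

lemma fpolyH_diff: "fpolyH (p - q) = fpolyH p - fpolyH q"
  by (metis add_diff_cancel_right' diff_add_cancel fpolyH_add)

lemma fpolyH_pCons: "fpolyH (pCons a p) = Poly_Mapping.single [] a + H * fpolyH p"
proof -
  have "fpolyH (pCons a p)
      = (\<Sum>i\<le>Suc (degree p). Poly_Mapping.single (replicate i GH) (coeff (pCons a p) i))"
    by (rule fpolyH_eq_sum_atMost) (simp add: degree_pCons_le)
  also have "\<dots> = Poly_Mapping.single [] a
      + (\<Sum>i\<le>degree p. Poly_Mapping.single (GH # replicate i GH) (coeff p i))"
    by (subst sum.atMost_Suc_shift) simp
  also have "\<dots> = Poly_Mapping.single [] a + H * fpolyH p"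
    by (simp add: fpolyH_def sum_distrib_left single_Cons_mult)
  finally show ?thesis .
qed

lemma fpolyH_const: "fpolyH [:a:] = Poly_Mapping.single [] a"
  using fpolyH_pCons[of a 0] by simp

lemma fpolyH_1: "fpolyH 1 = 1"
  by (simp add: one_pCons fpolyH_const single_Nil_one)

lemma fpolyH_X: "fpolyH [:0, 1:] = H"
  by (simp add: fpolyH_pCons fpolyH_1 flip: one_pCons)

lemma fpolyH_mult: "fpolyH (p * q) = fpolyH p * fpolyH q"
  by (induction p) (simp_all add: fpolyH_add fpolyH_smult fpolyH_pCons distrib_right mult.assoc)

lemma H_fpolyH_commute: "H * fpolyH p = fpolyH p * H"
  by (metis fpolyH_X fpolyH_mult mult.commute)

lemma fpolyH_commutation:
  assumes "H * X - X * H - Poly_Mapping.single [] c * X \<in> rel_ideal f"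
  shows "X * fpolyH p - fpolyH (pcompose p [:-c, 1:]) * X \<in> rel_ideal f"
proof (induction p)
  case 0
  then show ?case by (simp add: rel_ideal.zero)
next
  case (pCons a p)
  let ?p' = "pcompose p [:-c, 1:]"
  have "fpolyH [:-c, 1:] = H - Poly_Mapping.single [] c"
    by (simp add: fpolyH_pCons fpolyH_1 single_uminus flip: one_pCons)
  then have shifted: "fpolyH (pcompose (pCons a p) [:-c, 1:])
      = Poly_Mapping.single [] a + (H - Poly_Mapping.single [] c) * fpolyH ?p'"
    by (simp only: pcompose_pCons fpolyH_add fpolyH_mult fpolyH_const)
  have "X * fpolyH (pCons a p) - fpolyH (pcompose (pCons a p) [:-c, 1:]) * X
      = - ((H * X - X * H - Poly_Mapping.single [] c * X) * fpolyH p)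
        + (H - Poly_Mapping.single [] c) * (X * fpolyH p - fpolyH ?p' * X)"
    unfolding shifted fpolyH_pCons by (simp add: algebra_simps single_Nil_mult_commute)
  then show ?case
    using assms pCons.IH by (simp only:) (blast intro: rel_ideal_closure)
qed

lemma E_fpolyH_commutation: "E * fpolyH p - fpolyH (pcompose p [:-1, 1:]) * E \<in> rel_ideal f"
  using fpolyH_commutation[of E 1 f p] rels_in_rel_ideal(2) by (simp add: single_Nil_one)

lemma F_fpolyH_commutation: "F * fpolyH p - fpolyH (pcompose p [:1, 1:]) * F \<in> rel_ideal f"
  using fpolyH_commutation[of F "-1" f p] rels_in_rel_ideal(3)
  by (simp add: single_uminus single_Nil_one)

section \<open>The Casimir element\<close>

definition casimir :: "complex poly \<Rightarrow> falg" where
  "casimir u = F * E + fpolyH u"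

lemma casimir_central:
  assumes antidiff: "u - pcompose u [:-1, 1:] = f"
  shows "central f (casimir u)"
proof (rule central_if_commutes_with_gens)
  fix g
  have f_image: "fpolyH f = fpolyH u - fpolyH (pcompose u [:-1, 1:])"
    by (simp flip: antidiff fpolyH_diff)
  have E_comm: "casimir u * E - E * casimir u
      = - ((E * F - F * E - fpolyH f) * E) - (E * fpolyH u - fpolyH (pcompose u [:-1, 1:]) * E)"
    unfolding casimir_def f_image by (simp add: algebra_simps)
  have "pcompose f [:1, 1:] = pcompose u [:1, 1:] - u"
    by (simp flip: antidiff add: pcompose_diff pcompose_pCons flip: pcompose_assoc)
  then have shifted_f_image: "fpolyH (pcompose f [:1, 1:]) = fpolyH (pcompose u [:1, 1:]) - fpolyH u"
    by (simp add: fpolyH_diff)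
  have F_comm: "casimir u * F - F * casimir u
      = F * (E * F - F * E - fpolyH f) + (F * fpolyH f - fpolyH (pcompose f [:1, 1:]) * F)
        - (F * fpolyH u - fpolyH (pcompose u [:1, 1:]) * F)"
    unfolding casimir_def shifted_f_image by (simp add: algebra_simps)
  have H_comm: "casimir u * H - H * casimir u
      = - (F * (H * E - E * H - E)) - ((H * F - F * H + F) * E)"
    unfolding casimir_def using H_fpolyH_commute[of u] by (simp add: algebra_simps)
  show "casimir u * fgen g - fgen g * casimir u \<in> rel_ideal f"
    using rels_in_rel_ideal E_fpolyH_commutation F_fpolyH_commutation
    by (cases g) (simp_all only: E_comm F_comm H_comm, (blast intro: rel_ideal_closure)+)
qed

section \<open>Modules and Whittaker vectors\<close>

locale R_module =
  fixes f :: "complex poly" and sm :: "complex \<Rightarrow> 'v::ab_group_add \<Rightarrow> 'v"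
    and rho :: "gen \<Rightarrow> 'v \<Rightarrow> 'v"
  assumes is_Rmod: "is_Rmod f sm rho"
begin

lemma scale_one [simp]: "sm 1 v = v"
  and scale_scale: "sm a (sm b v) = sm (a * b) v"
  and scale_left_distrib: "sm (a + b) v = sm a v + sm b v"
  and scale_right_distrib: "sm a (u + v) = sm a u + sm a v"
  using is_Rmod by (simp_all add: is_Rmod_def cvs_def)

lemma scale_zero_left [simp]: "sm 0 v = 0"
  using scale_left_distrib[of 0 0 v] by simp

lemma scale_zero_right [simp]: "sm a 0 = 0"
  using scale_right_distrib[of a 0 0] by simp

lemma scale_minus_one: "sm (-1) v = - v"
  using scale_left_distrib[of 1 "-1" v] by (simp add: eq_neg_iff_add_eq_0 add.commute)

lemma rho_add: "rho g (u + v) = rho g u + rho g v"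
  and rho_scale: "rho g (sm a v) = sm a (rho g v)"
  using is_Rmod by (simp_all add: is_Rmod_def clin_def)

lemma rho_zero [simp]: "rho g 0 = 0"
  using rho_add[of g 0 0] by simp

lemma wact_append: "wact rho (u @ u') v = wact rho u (wact rho u' v)"
  by (induction u) auto

lemma wact_add: "wact rho u (v + v') = wact rho u v + wact rho u v'"
  by (induction u) (auto simp: rho_add)

lemma wact_scale: "wact rho u (sm a v) = sm a (wact rho u v)"
  by (induction u) (auto simp: rho_scale)

lemma wact_zero [simp]: "wact rho u 0 = 0"
  by (induction u) auto

lemma act_single: "act sm rho (Poly_Mapping.single u c) v = sm c (wact rho u v)"
  by (simp add: act_def)

lemma act_fgen: "act sm rho (fgen g) v = rho g v"
  by (simp add: fgen_def act_single)

lemma act_zero [simp]: "act sm rho 0 v = 0"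
  by (simp add: act_def)

lemma act_add: "act sm rho (p + q) v = act sm rho p v + act sm rho q v"
proof -
  let ?S = "Poly_Mapping.keys p \<union> Poly_Mapping.keys q"
  have act_eq_sum: "act sm rho r v = (\<Sum>u\<in>?S. sm (Poly_Mapping.lookup r u) (wact rho u v))"
    if "Poly_Mapping.keys r \<subseteq> ?S" for r
    unfolding act_def using that by (intro sum.mono_neutral_left) (auto simp: in_keys_iff)
  show ?thesis
    using keys_add[of p q]
    by (simp add: act_eq_sum lookup_add scale_left_distrib sum.distrib)
qed

lemma act_uminus: "act sm rho (- p) v = - act sm rho p v"
  using act_add[of p "- p" v] by (simp add: eq_neg_iff_add_eq_0 add.commute)

lemma act_diff: "act sm rho (p - q) v = act sm rho p v - act sm rho q v"
  using act_add[of p "- q" v] by (simp add: act_uminus)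

lemma act_vec_add: "act sm rho p (v + v') = act sm rho p v + act sm rho p v'"
  by (induction p rule: poly_mapping_induct)
    (simp_all add: act_add act_single wact_add scale_right_distrib algebra_simps)

lemma act_vec_scale: "act sm rho p (sm a v) = sm a (act sm rho p v)"
  by (induction p rule: poly_mapping_induct)
    (simp_all add: act_add act_single wact_scale scale_right_distrib scale_scale mult.commute)

lemma act_vec_zero [simp]: "act sm rho p 0 = 0"
  by (simp add: act_def)

lemma act_mult: "act sm rho (p * q) v = act sm rho p (act sm rho q v)"
proof (induction p rule: poly_mapping_induct)
  case (single u c)
  show ?case
    by (induction q rule: poly_mapping_induct)
      (simp_all add: act_single mult_single plus_list_def wact_append wact_scale scale_scale
        distrib_left act_add act_vec_add)
qed (simp_all add: distrib_right act_add)

lemma act_rel_ideal: "r \<in> rel_ideal f \<Longrightarrow> act sm rho r v = 0"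
proof (induction r arbitrary: v rule: rel_ideal.induct)
  case (gen r a b)
  then have "act sm rho r v = 0" for v
    using is_Rmod by (auto simp: rels_def is_Rmod_def fmul_eq_times act_diff act_add act_mult act_fgen)
  then show ?case
    by (simp add: fmul_eq_times act_mult)
qed (simp_all add: act_add)

lemma act_eq_mod_rel_ideal: "p - q \<in> rel_ideal f \<Longrightarrow> act sm rho p v = act sm rho q v"
  using act_rel_ideal[of "p - q" v] by (simp add: act_diff)

lemma submod_act_closed: "submod sm rho S \<Longrightarrow> v \<in> S \<Longrightarrow> act sm rho p v \<in> S"
proof (induction p rule: poly_mapping_induct)
  case (single u c)
  then have "wact rho u v \<in> S"
    by (induction u) (auto simp: submod_def)
  then show ?case
    using single.prems by (simp add: submod_def act_single)
qed (simp_all add: submod_def act_add)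

lemma submod_diff: "submod sm rho S \<Longrightarrow> u \<in> S \<Longrightarrow> v \<in> S \<Longrightarrow> u - v \<in> S"
  unfolding submod_def by (metis diff_conv_add_uminus scale_minus_one)

lemma cyc_subset_submod: "submod sm rho S \<Longrightarrow> v \<in> S \<Longrightarrow> cyc sm rho v \<subseteq> S"
  unfolding cyc_def using submod_act_closed by blast

lemma act_one: "act sm rho 1 v = v"
  by (simp flip: single_Nil_one add: act_single)

lemma in_cyc_self: "v \<in> cyc sm rho v"
  unfolding cyc_def by (rule CollectI, rule exI[of _ 1]) (simp add: act_one)

abbreviation polyH_act :: "complex poly \<Rightarrow> 'v \<Rightarrow> 'v" where
  "polyH_act q v \<equiv> act sm rho (fpolyH q) v"

lemma polyH_act_add: "polyH_act (p + q) v = polyH_act p v + polyH_act q v"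
  by (simp add: fpolyH_add act_add)

lemma polyH_act_diff: "polyH_act (p - q) v = polyH_act p v - polyH_act q v"
  by (simp add: fpolyH_diff act_diff)

lemma polyH_act_smult: "polyH_act (smult a q) v = sm a (polyH_act q v)"
  by (simp add: fpolyH_smult act_mult act_single)

lemma polyH_act_mult: "polyH_act (p * q) v = polyH_act p (polyH_act q v)"
  by (simp add: fpolyH_mult act_mult)

lemma polyH_act_const: "polyH_act [:a:] v = sm a v"
  by (simp add: fpolyH_const act_single)

lemma E_polyH_act: "rho GE (polyH_act q v) = polyH_act (pcompose q [:-1, 1:]) (rho GE v)"
  using act_eq_mod_rel_ideal[OF E_fpolyH_commutation] by (simp add: act_mult act_fgen)

lemma F_polyH_act: "rho GF (polyH_act q v) = polyH_act (pcompose q [:1, 1:]) (rho GF v)"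
  using act_eq_mod_rel_ideal[OF F_fpolyH_commutation] by (simp add: act_mult act_fgen)

lemma H_polyH_act: "rho GH (polyH_act q v) = polyH_act ([:0, 1:] * q) v"
  by (simp only: fpolyH_mult fpolyH_X act_mult act_fgen)

end

locale whittaker_vector = R_module +
  fixes eta :: complex and w
  assumes eta_nonzero: "eta \<noteq> 0"
    and whittaker: "rho GE w = sm eta w"
begin

lemma E_polyH_act_whittaker:
  "rho GE (polyH_act q w) = sm eta (polyH_act (pcompose q [:-1, 1:]) w)"
  by (simp add: E_polyH_act whittaker act_vec_scale)

lemma F_whittaker_in_polyH_orbit:
  assumes "has_inf_char f sm rho"
  obtains g where "rho GF w = polyH_act g w"
proof -
  obtain u where "u - pcompose u [:-1, 1:] = f"
    using ex_poly_antidifference by blast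
  then obtain c where c: "\<And>v. act sm rho (casimir u) v = sm c v"
    using assms casimir_central unfolding has_inf_char_def by blast
  have "sm c w = sm eta (rho GF w) + polyH_act u w"
    using c[of w] by (simp add: casimir_def act_add act_mult act_fgen whittaker rho_scale)
  then have "sm eta (rho GF w) = polyH_act ([:c:] - u) w"
    by (simp add: polyH_act_diff polyH_act_const)
  then have "rho GF w = polyH_act (smult (1 / eta) ([:c:] - u)) w"
    using eta_nonzero by (simp add: polyH_act_smult scale_scale flip: \<open>sm eta (rho GF w) = _\<close>)
  then show thesis
    by (rule that)
qed

lemma rho_polyH_act_in_polyH_orbit:
  assumes "rho GF w = polyH_act g w"
  shows "rho g' (polyH_act q w) \<in> range (\<lambda>q. polyH_act q w)"
proof (cases g')
  case GE
  have "rho g' (polyH_act q w) = polyH_act (smult eta (pcompose q [:-1, 1:])) w"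
    by (simp add: GE E_polyH_act_whittaker polyH_act_smult)
  then show ?thesis
    by (rule range_eqI)
next
  case GF
  have "rho g' (polyH_act q w) = polyH_act (pcompose q [:1, 1:] * g) w"
    by (simp add: GF F_polyH_act assms polyH_act_mult)
  then show ?thesis
    by (rule range_eqI)
next
  case GH
  have "rho g' (polyH_act q w) = polyH_act ([:0, 1:] * q) w"
    unfolding GH by (rule H_polyH_act)
  then show ?thesis
    by (rule range_eqI)
qed

lemma submod_polyH_orbit:
  assumes "rho GF w = polyH_act g w"
  shows "submod sm rho (range (\<lambda>q. polyH_act q w))"
  unfolding submod_def
proof (intro conjI ballI allI)
  show "0 \<in> range (\<lambda>q. polyH_act q w)"
    by (rule range_eqI[of _ _ 0]) simp
next
  fix x y
  assume "x \<in> range (\<lambda>q. polyH_act q w)" and "y \<in> range (\<lambda>q. polyH_act q w)"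
  then obtain p q where "x = polyH_act p w" and "y = polyH_act q w"
    by blast
  then show "x + y \<in> range (\<lambda>q. polyH_act q w)"
    by (intro range_eqI[of _ _ "p + q"]) (simp add: polyH_act_add)
next
  fix a x
  assume "x \<in> range (\<lambda>q. polyH_act q w)"
  then obtain q where "x = polyH_act q w"
    by blast
  then show "sm a x \<in> range (\<lambda>q. polyH_act q w)"
    by (intro range_eqI[of _ _ "smult a q"]) (simp add: polyH_act_smult)
next
  fix g' x
  assume "x \<in> range (\<lambda>q. polyH_act q w)"
  then show "rho g' x \<in> range (\<lambda>q. polyH_act q w)"
    using rho_polyH_act_in_polyH_orbit[OF assms] by blast
qed

lemma cyc_eq_polyH_orbit:
  assumes "rho GF w = polyH_act g w"
  shows "cyc sm rho w = range (\<lambda>q. polyH_act q w)"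
proof
  have "w \<in> range (\<lambda>q. polyH_act q w)"
    by (rule range_eqI[of _ _ 1]) (simp add: fpolyH_1 act_one)
  then show "cyc sm rho w \<subseteq> range (\<lambda>q. polyH_act q w)"
    by (rule cyc_subset_submod[OF submod_polyH_orbit[OF assms]])
  show "range (\<lambda>q. polyH_act q w) \<subseteq> cyc sm rho w"
    by (auto simp: cyc_def)
qed

lemma whittaker_in_submod_of_polyH_orbit:
  assumes "submod sm rho N" and "N \<subseteq> range (\<lambda>q. polyH_act q w)" and "N \<noteq> {0}"
  shows "w \<in> N"
proof -
  let ?J = "{q. polyH_act q w \<in> N}"
  obtain v where "v \<in> N" "v \<noteq> 0"
    using assms(1,3) unfolding submod_def by blast
  then obtain q where "q \<in> ?J" "q \<noteq> 0"
    using assms(2) by fastforce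
  moreover have "p - q \<in> ?J" if "p \<in> ?J" "q \<in> ?J" for p q
    using that submod_diff[OF assms(1)] by (simp add: polyH_act_diff)
  moreover have "pcompose q [:-1, 1:] \<in> ?J" if "q \<in> ?J" for q
  proof -
    have "sm (1 / eta) (rho GE (polyH_act q w)) \<in> N"
      using that assms(1) unfolding submod_def by simp
    then show ?thesis
      using eta_nonzero by (simp add: E_polyH_act_whittaker scale_scale)
  qed
  ultimately obtain a where "a \<noteq> 0" "[:a:] \<in> ?J"
    using shift_closed_poly_subgroup_has_const[of ?J "-1" q] by auto
  then have "sm (1 / a) (sm a w) \<in> N"
    using assms(1) unfolding submod_def by (simp add: polyH_act_const)
  then show ?thesis
    using \<open>a \<noteq> 0\<close> by (simp add: scale_scale)
qed

end

theorem mainTheorem7: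
  fixes f :: "complex poly" and sm :: "complex \<Rightarrow> 'v::ab_group_add \<Rightarrow> 'v"
    and rho :: "gen \<Rightarrow> 'v \<Rightarrow> 'v" and eta :: complex and w :: 'v
  assumes "is_Rmod f sm rho"
    and "has_inf_char f sm rho"
    and "eta \<noteq> 0"
    and "w \<noteq> 0"
    and "rho GE w = sm eta w"
  shows "irreducible_submod sm rho (cyc sm rho w)"
proof -
  interpret whittaker_vector f sm rho eta w
    using assms(1,3,5) by unfold_locales
  obtain g where g: "rho GF w = polyH_act g w"
    using F_whittaker_in_polyH_orbit assms(2) by blast
  show ?thesis
    unfolding irreducible_submod_def
  proof (intro conjI allI impI)
    show "submod sm rho (cyc sm rho w)"
      unfolding cyc_eq_polyH_orbit[OF g] by (rule submod_polyH_orbit[OF g])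
    show "cyc sm rho w \<noteq> {0}"
      using in_cyc_self[of w] assms(4) by blast
  next
    fix N
    assume N: "submod sm rho N \<and> N \<subseteq> cyc sm rho w"
    show "N = {0} \<or> N = cyc sm rho w"
    proof (cases "N = {0}")
      case False
      then have "w \<in> N"
        using N whittaker_in_submod_of_polyH_orbit by (simp add: cyc_eq_polyH_orbit[OF g])
      then show ?thesis
        using N cyc_subset_submod by blast
    qed simp
  qed
qed

end
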